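(* Let $\mathcal{S}$ be a compact surface without boundary and let $(\mathfrak{u},\mathfrak{l})$ be a labeled unicellular mobile on $\mathcal{S}$. Then: (i) If $A$ and $B$ are two distinct nontrivial arcs of $(\mathfrak{u},\mathfrak{l})$ whose intersection contains internal corners of $A$ or of $B$, then $A\subseteq B$ or $B\subseteq A$, and the level of the larger arc is strictly lower than the level of the smaller arc. (ii) The following three properties are equivalent: (a) for all $i\ge 1$, every nontrivial arc at level $i$ contains a corner with label $i+1$; (b) for all $i\ge 1$, every nontrivial arc at level $i$ has a set of internal corner labels of the form $\{i+1,i+2,\dots,m\}$ for some integer $m$; (c) for all $i\ge 2$ and for every corner with label $i$, either the first subsequent corner with label strictly smaller than $i$ has label $i-1$, or the last preceding corner with label strictly smaller than $i$ has label $i-1$. (iii) If the equivalent properties of (ii) hold, then for all $i\ge 2$, every arc at level $i$ is included in a unique arc at level $i-1$, and this arc is nontrivial; similarly, every corner labeled $i\ge 2$ is included in a unique arc at level $i-1$, and this arc is nontrivial.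
   Context: A map is a cellular embedding of a finite graph (loops and multiple edges allowed) into $\mathcal{S}$, considered up to homeomorphism; it is rooted when given a distinguished oriented corner (a corner is an angular sector between two consecutive half-edges around a vertex in the same face). A labeled unicellular mobile is a pair $(\mathfrak{u},\mathfrak{l})$ where $\mathfrak{u}$ is a rooted map of $\mathcal{S}$ with exactly one face, whose vertex set is partitioned as $V_\bullet(\mathfrak{u})\sqcup V_\circ(\mathfrak{u})$ so that every edge links a vertex of $V_\bullet(\mathfrak{u})$ to a vertex of $V_\circ(\mathfrak{u})$, the root vertex lies in $V_\circ(\mathfrak{u})$, and $\mathfrak{l}:V_\circ(\mathfrak{u})\to\{1,2,3,\dots\}$ is a function with minimum $1$. Since the face is a disk and the root orients it, the corners of $\mathfrak{u}$ are cyclically ordered along the contour of the face; only corners incident to vertices of $V_\circ(\mathfrak{u})$ are considered, in this cyclic order, and the label of a corner is the label of its vertex ("subsequent"/"preceding" refer to this cyclic order). An arc is a contiguous interval of two or more consecutive such corners whose first and last corners (its extremities) have labels strictly smaller than the labels of all other corners of the interval (its internal corners). An arc whose extremities have labels $i$ and $j$ is an $\{i,j\}$-arc and its level is $\max(i,j)$. An arc is trivial if it has exactly two corners. *)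

theory Defs
  imports Main
begin

text \<open>
  A labeled unicellular mobile is abstracted to the cyclic sequence of labels of
  its white corners (corners incident to vertices of V_circ), read along the
  contour of the unique face starting at the root corner.  The contour is unrolled periodically: position k (any nat)
  is the corner k mod length ls, with label lab ls k.
\<close>

definition mobile_labels :: "nat list \<Rightarrow> bool" where
  "mobile_labels ls = (ls \<noteq> [] \<and> (\<forall>x\<in>set ls. 1 \<le> x) \<and> 1 \<in> set ls)"

definition lab :: "nat list \<Rightarrow> nat \<Rightarrow> nat" where
  "lab ls k = ls ! (k mod length ls)"

text \<open>An interval of consecutive corners is a pair (s, m): it starts at corner
  s < length ls and consists of the m consecutive positions s, s+1, ..., s+m-1
  of the unrolled contour.\<close>

definition is_arc :: "nat list \<Rightarrow> nat \<times> nat \<Rightarrow> bool" where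
  "is_arc ls A = (case A of (s, m) \<Rightarrow>
     s < length ls \<and> 2 \<le> m \<and>
     (\<forall>j. 0 < j \<and> j < m - 1 \<longrightarrow> lab ls s < lab ls (s + j) \<and> lab ls (s + m - 1) < lab ls (s + j)))"

definition arc_level :: "nat list \<Rightarrow> nat \<times> nat \<Rightarrow> nat" where
  "arc_level ls A = (case A of (s, m) \<Rightarrow> max (lab ls s) (lab ls (s + m - 1)))"

definition trivial_arc :: "nat \<times> nat \<Rightarrow> bool" where
  "trivial_arc A = (snd A = 2)"

definition arc_corners :: "nat list \<Rightarrow> nat \<times> nat \<Rightarrow> nat set" where
  "arc_corners ls A = (case A of (s, m) \<Rightarrow> {(s + j) mod length ls | j. j < m})"

definition internal_corners :: "nat list \<Rightarrow> nat \<times> nat \<Rightarrow> nat set" where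
  "internal_corners ls A = (case A of (s, m) \<Rightarrow> {(s + j) mod length ls | j. 0 < j \<and> j < m - 1})"

definition arc_sub :: "nat list \<Rightarrow> nat \<times> nat \<Rightarrow> nat \<times> nat \<Rightarrow> bool" where
  "arc_sub ls A B = (\<exists>d. d + snd A \<le> snd B \<and> fst A = (fst B + d) mod length ls)"

definition prop_a :: "nat list \<Rightarrow> bool" where
  "prop_a ls = (\<forall>i\<ge>1. \<forall>A. is_arc ls A \<and> \<not> trivial_arc A \<and> arc_level ls A = i \<longrightarrow>
                 (\<exists>c\<in>arc_corners ls A. ls ! c = i + 1))"

definition prop_b :: "nat list \<Rightarrow> bool" where
  "prop_b ls = (\<forall>i\<ge>1. \<forall>A. is_arc ls A \<and> \<not> trivial_arc A \<and> arc_level ls A = i \<longrightarrow>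
                 (\<exists>m::nat. (\<lambda>c. ls ! c) ` internal_corners ls A = {i + 1..m}))"

text \<open>Property (ii)(c): the first subsequent corner with label < i (at distance j
  forward), resp. the last preceding corner with label < i (at distance j
  backward), has label i - 1.\<close>
definition prop_c :: "nat list \<Rightarrow> bool" where
  "prop_c ls = (\<forall>i\<ge>2. \<forall>c<length ls. ls ! c = i \<longrightarrow>
     (\<exists>j. 0 < j \<and> j < length ls \<and> lab ls (c + j) = i - 1 \<and>
          (\<forall>k. 0 < k \<and> k < j \<longrightarrow> i \<le> lab ls (c + k)))
   \<or> (\<exists>j. 0 < j \<and> j < length ls \<and> lab ls (c + length ls - j) = i - 1 \<and>
          (\<forall>k. 0 < k \<and> k < j \<longrightarrow> i \<le> lab ls (c + length ls - k))))"

end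

theory Submission
  imports Defs
begin

text \<open>Unroll the contour periodically, so that an arc becomes an interval of integer positions
  whose internal labels exceed both extremity labels.  Two such intervals sharing a position that
  is internal to one of them are either nested or crossing.  Crossing is impossible: each would
  have an extremity strictly inside the other, and each of these two labels would exceed the
  other.  If they are nested and distinct, an extremity of the inner interval lies strictly inside
  the outer one, so the outer arc has the lower level.

  For a position of label i \<ge> 2 consider the interval from the last preceding to the first
  subsequent position with label below i.  It is a nontrivial arc of level below i, and any arc
  of level i - 1 through that position must coincide with it.  Property (c) says precisely that
  its level is i - 1.  Property (a) forces this, since the label level + 1 must occur in it and
  its internal labels are at least i.  Conversely, under (c) every internal label v of an arc has
  v - 1 in the same arc, because the arc enclosing a corner of label v is contained in it; so
  the internal labels form an interval, which is (b), and (b) trivially gives (a).  Finally, an arc at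
  level i has an extremity of label i, and the arc of level i - 1 enclosing that corner contains
  the whole arc by nesting.\<close>

lemma lab_add_mult_length [simp]: "lab ls (x + k * length ls) = lab ls x"
  by (simp add: lab_def)

lemma lab_add_length [simp]: "lab ls (x + length ls) = lab ls x"
  by (simp add: lab_def)

lemma lab_length_add [simp]: "lab ls (length ls + x) = lab ls x"
  by (simp add: lab_def)

lemma lab_mod_add: "lab ls (x mod length ls + j) = lab ls (x + j)"
  by (simp add: lab_def mod_add_left_eq)

lemma lab_mod [simp]: "lab ls (x mod length ls) = lab ls x"
  using lab_mod_add[of ls x 0] by simp

lemma nth_mod_length_eq_lab: "ls ! (x mod length ls) = lab ls x"
  by (simp add: lab_def)

lemma lab_eq_nth: "c < length ls \<Longrightarrow> lab ls c = ls ! c"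
  by (simp add: lab_def)

lemma mobile_labels_length_pos: "mobile_labels ls \<Longrightarrow> 0 < length ls"
  by (simp add: mobile_labels_def)

lemma mobile_labels_lab_ge_1: "mobile_labels ls \<Longrightarrow> 1 \<le> lab ls x"
  unfolding mobile_labels_def lab_def
  by (metis length_greater_0_conv mod_less_divisor nth_mem)

lemma lab_sub_eq_lab_add: "j \<le> length ls \<Longrightarrow> lab ls (x + length ls - j) = lab ls (x + (length ls - j))"
  by (simp add: add_diff_assoc)

lemma mobile_labels_ex_lab_one:
  assumes m: "mobile_labels ls" and l: "lab ls q \<noteq> 1"
  shows "\<exists>j. 0 < j \<and> j < length ls \<and> lab ls (q + j) = 1"
    and "\<exists>j. 0 < j \<and> j < length ls \<and> lab ls (q + length ls - j) = 1"
proof -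
  let ?n = "length ls"
  obtain z where "z < ?n" "ls ! z = 1"
    using m unfolding mobile_labels_def by (metis in_set_conv_nth)
  then have z: "z < ?n" "lab ls z = 1" "lab ls (z + ?n) = 1" by (simp_all add: lab_eq_nth)
  define c where "c = q mod ?n"
  have c: "c < ?n" using mobile_labels_length_pos[OF m] c_def by simp
  have cz: "c \<noteq> z" using z l c_def by auto
  have fwd: "lab ls (q + j) = lab ls (c + j)" for j using lab_mod_add c_def by metis
  have bwd: "lab ls (q + ?n - j) = lab ls (c + ?n - j)" if "j \<le> ?n" for j
    using fwd[of "?n - j"] lab_sub_eq_lab_add[OF that] by metis
  show "\<exists>j. 0 < j \<and> j < ?n \<and> lab ls (q + j) = 1"
  proof (cases "c < z")
    case True
    then show ?thesis using fwd[of "z - c"] z c by (intro exI[of _ "z - c"]) auto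
  next
    case False
    then show ?thesis using fwd[of "z + ?n - c"] cz z c
      by (intro exI[of _ "z + ?n - c"]) (auto simp: add.commute)
  qed
  show "\<exists>j. 0 < j \<and> j < ?n \<and> lab ls (q + ?n - j) = 1"
  proof (cases "z < c")
    case True
    have "c + ?n - (c - z) = z + ?n" using True by auto
    then show ?thesis using bwd[of "c - z"] z True c by (intro exI[of _ "c - z"]) auto
  next
    case False
    then have "c + ?n - (c + ?n - z) = z" using cz z by auto
    then show ?thesis using bwd[of "c + ?n - z"] z cz False by (intro exI[of _ "c + ?n - z"]) auto
  qed
qed

lemma arc_internal_label_gt:
  assumes "is_arc ls (s, m)" "0 < j" "j < m - 1"
  shows "lab ls s < lab ls (s + j)" "lab ls (s + m - 1) < lab ls (s + j)"
    "arc_level ls (s, m) < lab ls (s + j)"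
  using assms unfolding is_arc_def arc_level_def by auto

lemma internal_corners_subset: "internal_corners ls A \<subseteq> arc_corners ls A"
  unfolding internal_corners_def arc_corners_def by (auto split: prod.splits)

lemma arc_sub_corners_subset:
  assumes "arc_sub ls A B"
  shows "arc_corners ls A \<subseteq> arc_corners ls B"
proof
  fix x assume "x \<in> arc_corners ls A"
  then obtain j where j: "j < snd A" "x = (fst A + j) mod length ls"
    unfolding arc_corners_def by (auto split: prod.splits)
  obtain d where d: "d + snd A \<le> snd B" "fst A = (fst B + d) mod length ls"
    using assms unfolding arc_sub_def by blast
  have "x = (fst B + (d + j)) mod length ls" using j(2) d(2) by (simp add: mod_add_left_eq add.assoc)
  then show "x \<in> arc_corners ls B" using d(1) j(1) unfolding arc_corners_def by (auto split: prod.splits)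
qed

lemma arc_internal_corner_label_gt:
  assumes "is_arc ls A" "x \<in> internal_corners ls A"
  shows "arc_level ls A < ls ! x"
  using assms arc_internal_label_gt(3)[of ls]
  unfolding internal_corners_def by (auto split: prod.splits simp: nth_mod_length_eq_lab)

lemma arc_corner_internal_or_label_le:
  assumes "is_arc ls A" "y \<in> arc_corners ls A"
  shows "y \<in> internal_corners ls A \<or> ls ! y \<le> arc_level ls A"
proof -
  obtain s m where A: "A = (s, m)" by fastforce
  obtain j where j: "j < m" "y = (s + j) mod length ls" using assms(2) A unfolding arc_corners_def by auto
  consider "0 < j \<and> j < m - 1" | "j = 0" | "j = m - 1" using j(1) by linarith
  then show ?thesis
  proof cases
    case 1
    then show ?thesis using j A unfolding internal_corners_def by auto
  next
    case 2
    then show ?thesis using j A by (simp add: arc_level_def nth_mod_length_eq_lab)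
  next
    case 3
    then have "s + j = s + m - 1" using j(1) by simp
    then show ?thesis using j A by (simp add: arc_level_def nth_mod_length_eq_lab)
  qed
qed

lemma arc_level_attained:
  assumes "is_arc ls A"
  shows "\<exists>y\<in>arc_corners ls A. ls ! y = arc_level ls A"
proof -
  obtain s m where A: "A = (s, m)" by fastforce
  have "2 \<le> m" using assms A unfolding is_arc_def by auto
  have first: "s mod length ls \<in> arc_corners ls A"
    unfolding A arc_corners_def using \<open>2 \<le> m\<close> by (auto intro!: exI[of _ "0::nat"])
  have last: "(s + m - 1) mod length ls \<in> arc_corners ls A"
    unfolding A arc_corners_def using \<open>2 \<le> m\<close> by (force intro!: exI[of _ "m - 1"])
  show ?thesis
  proof (cases "lab ls s \<le> lab ls (s + m - 1)")
    case True
    then show ?thesis by (intro bexI[OF _ last]) (simp add: A arc_level_def nth_mod_length_eq_lab)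
  next
    case False
    then show ?thesis by (intro bexI[OF _ first]) (simp add: A arc_level_def nth_mod_length_eq_lab)
  qed
qed

section \<open>Nesting of arcs\<close>

lemma mod_eq_imp_lift_eq: "(x::nat) mod n = y mod n \<Longrightarrow> x + (y div n) * n = y + (x div n) * n"
  by (metis add.commute add.left_commute div_mult_mod_eq)

lemma arc_level_lift:
  assumes "is_arc ls (a, p)" "a0 = a + u * length ls"
  shows "arc_level ls (a, p) = max (lab ls a0) (lab ls (a0 + p - 1))"
proof -
  have "a0 + p - 1 = a + p - 1 + u * length ls" using assms unfolding is_arc_def by auto
  then show ?thesis unfolding arc_level_def using assms(2) by simp
qed

lemma arc_lift_internal_label_gt:
  assumes "is_arc ls (a, p)" "a0 = a + u * length ls" "a0 < y" "y < a0 + p - 1"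
  shows "arc_level ls (a, p) < lab ls y"
proof -
  have "y = a + (y - a0) + u * length ls" using assms by auto
  then have "lab ls y = lab ls (a + (y - a0))" by (metis lab_add_mult_length)
  then show ?thesis using arc_internal_label_gt(3)[OF assms(1), of "y - a0"] assms by auto
qed

lemma arc_lifts_not_crossing:
  assumes A: "is_arc ls (a, p)" "a0 = a + u * length ls"
    and B: "is_arc ls (b, q)" "b0 = b + w * length ls"
    and "a0 < b0" "b0 < a0 + p - 1" "a0 + p - 1 < b0 + q - 1"
  shows False
proof -
  have "arc_level ls (a, p) < lab ls b0" by (rule arc_lift_internal_label_gt[OF A]) (use assms in auto)
  also have "\<dots> \<le> arc_level ls (b, q)" using arc_level_lift[OF B] by simp
  also have "\<dots> < lab ls (a0 + p - 1)" by (rule arc_lift_internal_label_gt[OF B]) (use assms in auto)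
  also have "\<dots> \<le> arc_level ls (a, p)" using arc_level_lift[OF A] by simp
  finally show False by simp
qed

lemma arc_level_lt_if_lift_within:
  assumes A: "is_arc ls (a, p)" "a0 = a + u * length ls"
    and B: "is_arc ls (b, q)" "b0 = b + w * length ls"
    and "a0 \<le> b0" "b0 + q \<le> a0 + p" "(a0, p) \<noteq> (b0, q)"
  shows "arc_level ls (a, p) < arc_level ls (b, q)"
proof -
  have "2 \<le> q" using B(1) unfolding is_arc_def by simp
  consider "a0 < b0" | "a0 = b0" "q < p" using assms by fastforce
  then show ?thesis
  proof cases
    case 1
    have "arc_level ls (a, p) < lab ls b0"
      by (rule arc_lift_internal_label_gt[OF A]) (use 1 assms \<open>2 \<le> q\<close> in auto)
    then show ?thesis using arc_level_lift[OF B] by simp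
  next
    case 2
    have "arc_level ls (a, p) < lab ls (b0 + q - 1)"
      by (rule arc_lift_internal_label_gt[OF A]) (use 2 \<open>2 \<le> q\<close> in auto)
    then show ?thesis using arc_level_lift[OF B] by simp
  qed
qed

lemma arc_sub_if_lift_within:
  assumes "a0 = a + u * length ls" "b0 = b + w * length ls" "b < length ls"
    "a0 \<le> b0" "b0 + q \<le> a0 + p"
  shows "arc_sub ls (b, q) (a, p)"
proof -
  have "(a + (b0 - a0)) mod length ls = (a + (b0 - a0) + u * length ls) mod length ls" by simp
  also have "a + (b0 - a0) + u * length ls = b + w * length ls" using assms by auto
  also have "(b + w * length ls) mod length ls = b" using assms(3) by simp
  finally show ?thesis unfolding arc_sub_def using assms by (intro exI[of _ "b0 - a0"]) auto
qed

lemma arcs_nested_if_share_internal_position: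
  assumes A: "is_arc ls (a, p)" and B: "is_arc ls (b, q)" and ne: "(a, p) \<noteq> (b, q)"
    and j: "0 < j" "j < p - 1" and k: "k < q"
    and eq: "(a + j) mod length ls = (b + k) mod length ls"
  shows "(arc_sub ls (a, p) (b, q) \<and> arc_level ls (b, q) < arc_level ls (a, p)) \<or>
         (arc_sub ls (b, q) (a, p) \<and> arc_level ls (a, p) < arc_level ls (b, q))"
proof -
  let ?n = "length ls"
  have an: "a < ?n" using A unfolding is_arc_def by auto
  have bn: "b < ?n" using B unfolding is_arc_def by auto
  \<comment> \<open>lift both arcs to the same turn of the unrolled contour, where the shared position is
    a common integer\<close>
  define a0 where "a0 = a + ((b + k) div ?n) * ?n"
  define b0 where "b0 = b + ((a + j) div ?n) * ?n"
  have shared: "a0 + j = b0 + k" using mod_eq_imp_lift_eq[OF eq] unfolding a0_def b0_def by simp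
  have "a0 mod ?n = a" "b0 mod ?n = b" using an bn a0_def b0_def by auto
  consider "a0 = b0 \<and> p = q" | "a0 \<le> b0 \<and> b0 + q \<le> a0 + p \<and> (a0, p) \<noteq> (b0, q)"
    | "b0 \<le> a0 \<and> a0 + p \<le> b0 + q \<and> (b0, q) \<noteq> (a0, p)"
    | "b0 < a0 \<and> b0 + q < a0 + p" | "a0 < b0 \<and> a0 + p < b0 + q" by fastforce
  then show ?thesis
  proof cases
    case 1
    then show ?thesis using ne \<open>a0 mod ?n = a\<close> \<open>b0 mod ?n = b\<close> by simp
  next
    case 2
    then show ?thesis
      using arc_sub_if_lift_within[OF a0_def b0_def bn] arc_level_lt_if_lift_within[OF A a0_def B b0_def]
      by simp
  next
    case 3
    then show ?thesis
      using arc_sub_if_lift_within[OF b0_def a0_def an] arc_level_lt_if_lift_within[OF B b0_def A a0_def]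
      by simp
  next
    case 4
    then have "a0 < b0 + q - 1" "b0 + q - 1 < a0 + p - 1" using shared j k by linarith+
    then show ?thesis using arc_lifts_not_crossing[OF B b0_def A a0_def] 4 by blast
  next
    case 5
    then have "b0 < a0 + p - 1" "a0 + p - 1 < b0 + q - 1" using shared j k by linarith+
    then show ?thesis using arc_lifts_not_crossing[OF A a0_def B b0_def] 5 by blast
  qed
qed

lemma arcs_nested_if_share_internal_corner:
  assumes "is_arc ls A" "is_arc ls B" "A \<noteq> B"
    "arc_corners ls A \<inter> arc_corners ls B \<inter> (internal_corners ls A \<union> internal_corners ls B) \<noteq> {}"
  shows "(arc_sub ls A B \<and> arc_level ls B < arc_level ls A) \<or>
         (arc_sub ls B A \<and> arc_level ls A < arc_level ls B)"
proof -
  obtain a p where a: "A = (a, p)" by fastforce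
  obtain b q where b: "B = (b, q)" by fastforce
  obtain x where x: "x \<in> arc_corners ls A" "x \<in> arc_corners ls B"
    "x \<in> internal_corners ls A \<or> x \<in> internal_corners ls B"
    using assms(4) by blast
  from x(3) show ?thesis
  proof
    assume "x \<in> internal_corners ls A"
    then obtain j where "0 < j" "j < p - 1" "x = (a + j) mod length ls"
      unfolding a internal_corners_def by auto
    moreover obtain k where "k < q" "x = (b + k) mod length ls"
      using x(2) unfolding b arc_corners_def by auto
    ultimately show ?thesis
      using arcs_nested_if_share_internal_position[of ls a p b q j k] assms(1-3) a b by auto
  next
    assume "x \<in> internal_corners ls B"
    then obtain j where "0 < j" "j < q - 1" "x = (b + j) mod length ls"
      unfolding b internal_corners_def by auto
    moreover obtain k where "k < p" "x = (a + k) mod length ls"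
      using x(1) unfolding a arc_corners_def by auto
    ultimately show ?thesis
      using arcs_nested_if_share_internal_position[of ls b q a p j k] assms(1-3) a b by auto
  qed
qed

section \<open>The arc enclosing a corner\<close>

definition next_below :: "nat list \<Rightarrow> nat \<Rightarrow> nat \<Rightarrow> nat" where
  "next_below ls i q = (LEAST j. 0 < j \<and> lab ls (q + j) < i)"

definition prev_below :: "nat list \<Rightarrow> nat \<Rightarrow> nat \<Rightarrow> nat" where
  "prev_below ls i q = (LEAST j. 0 < j \<and> j \<le> length ls \<and> lab ls (q + length ls - j) < i)"

text \<open>For lab ls q = i \<ge> 2 this is the only candidate for an arc at level i - 1 through q.\<close>

definition enclosing_arc :: "nat list \<Rightarrow> nat \<Rightarrow> nat \<Rightarrow> nat \<times> nat" where
  "enclosing_arc ls i q =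
     ((q + length ls - prev_below ls i q) mod length ls, prev_below ls i q + next_below ls i q + 1)"

lemma next_below_spec:
  assumes m: "mobile_labels ls" and l: "lab ls q \<noteq> 1" and i: "2 \<le> i"
  shows "0 < next_below ls i q" "next_below ls i q < length ls" "lab ls (q + next_below ls i q) < i"
    "\<And>k. 0 < k \<Longrightarrow> k < next_below ls i q \<Longrightarrow> i \<le> lab ls (q + k)"
proof -
  obtain j where j: "0 < j" "j < length ls" "lab ls (q + j) = 1"
    using mobile_labels_ex_lab_one(1)[OF m l] by blast
  define P where "P = (\<lambda>j. 0 < j \<and> lab ls (q + j) < i)"
  have Pj: "P j" using j i P_def by auto
  show "0 < next_below ls i q" "lab ls (q + next_below ls i q) < i"
    unfolding next_below_def using LeastI[of P j, OF Pj] P_def by auto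
  show "next_below ls i q < length ls"
    unfolding next_below_def using Least_le[of P j, OF Pj] j P_def by auto
  fix k assume "0 < k" "k < next_below ls i q"
  then show "i \<le> lab ls (q + k)" unfolding next_below_def using not_less_Least by fastforce
qed

lemma prev_below_spec:
  assumes m: "mobile_labels ls" and l: "lab ls q \<noteq> 1" and i: "2 \<le> i"
  shows "0 < prev_below ls i q" "prev_below ls i q < length ls"
    "lab ls (q + length ls - prev_below ls i q) < i"
    "\<And>k. 0 < k \<Longrightarrow> k < prev_below ls i q \<Longrightarrow> i \<le> lab ls (q + length ls - k)"
proof -
  obtain j where j: "0 < j" "j < length ls" "lab ls (q + length ls - j) = 1"
    using mobile_labels_ex_lab_one(2)[OF m l] by blast
  define P where "P = (\<lambda>j. 0 < j \<and> j \<le> length ls \<and> lab ls (q + length ls - j) < i)"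
  have Pj: "P j" using j i P_def by auto
  show "0 < prev_below ls i q" "lab ls (q + length ls - prev_below ls i q) < i"
    unfolding prev_below_def using LeastI[of P j, OF Pj] P_def by auto
  show bl: "prev_below ls i q < length ls"
    unfolding prev_below_def using Least_le[of P j, OF Pj] j P_def by auto
  fix k assume k: "0 < k" "k < prev_below ls i q"
  then have "\<not> (0 < k \<and> k \<le> length ls \<and> lab ls (q + length ls - k) < i)"
    unfolding prev_below_def using not_less_Least by blast
  then show "i \<le> lab ls (q + length ls - k)" using k bl by auto
qed

lemma next_below_eqI:
  assumes "0 < j" "lab ls (q + j) < i" "\<And>k. 0 < k \<Longrightarrow> k < j \<Longrightarrow> i \<le> lab ls (q + k)"
  shows "next_below ls i q = j"
  unfolding next_below_def
proof (rule Least_equality)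
  fix k assume "0 < k \<and> lab ls (q + k) < i"
  then show "j \<le> k" using assms(3)[of k] by (cases "k < j") auto
qed (use assms in auto)

lemma prev_below_eqI:
  assumes "0 < j" "j \<le> length ls" "lab ls (q + length ls - j) < i"
    "\<And>k. 0 < k \<Longrightarrow> k < j \<Longrightarrow> i \<le> lab ls (q + length ls - k)"
  shows "prev_below ls i q = j"
  unfolding prev_below_def
proof (rule Least_equality)
  fix k assume "0 < k \<and> k \<le> length ls \<and> lab ls (q + length ls - k) < i"
  then show "j \<le> k" using assms(4)[of k] by (cases "k < j") auto
qed (use assms in auto)

lemma enclosing_arc_spec:
  assumes m: "mobile_labels ls" and l: "lab ls q = i" and i: "2 \<le> i"
  defines "E \<equiv> enclosing_arc ls i q"
  shows "is_arc ls E" "\<not> trivial_arc E"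
    "lab ls (fst E) = lab ls (q + length ls - prev_below ls i q)"
    "lab ls (fst E + snd E - 1) = lab ls (q + next_below ls i q)"
    "\<And>j. 0 < j \<Longrightarrow> j < snd E - 1 \<Longrightarrow> i \<le> lab ls (fst E + j)"
    "arc_level ls E < i"
proof -
  let ?n = "length ls" let ?f = "next_below ls i q" let ?b = "prev_below ls i q"
  have l1: "lab ls q \<noteq> 1" using l i by auto
  note F = next_below_spec[OF m l1 i] and B = prev_below_spec[OF m l1 i]
  have n: "0 < ?n" using m mobile_labels_length_pos by blast
  have E: "E = ((q + ?n - ?b) mod ?n, ?b + ?f + 1)" unfolding E_def enclosing_arc_def ..
  have start: "lab ls (fst E + j) = lab ls (q + ?n - ?b + j)" for j
    unfolding E using lab_mod_add by simp
  show first: "lab ls (fst E) = lab ls (q + ?n - ?b)" using start[of 0] by simp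
  have "lab ls (fst E + snd E - 1) = lab ls (q + ?n - ?b + (?b + ?f))"
    using start[of "?b + ?f"] unfolding E by simp
  also have "\<dots> = lab ls (q + ?f + ?n)" by (rule arg_cong[where f = "lab ls"]) (use B(2) in auto)
  finally show last: "lab ls (fst E + snd E - 1) = lab ls (q + ?f)" by simp
  show internal: "i \<le> lab ls (fst E + j)" if j: "0 < j" "j < snd E - 1" for j
  proof -
    consider "j < ?b" | "j = ?b" | "?b < j" by linarith
    then show ?thesis
    proof cases
      case 1
      then have "q + ?n - ?b + j = q + ?n - (?b - j)" using B(2) by auto
      then show ?thesis using start B(4)[of "?b - j"] 1 j by auto
    next
      case 2
      then have "q + ?n - ?b + j = q + ?n" using B(2) by auto
      then show ?thesis using start l by auto
    next
      case 3
      then have "q + ?n - ?b + j = q + (j - ?b) + ?n" using B(2) by auto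
      moreover have "j - ?b < ?f" using j 3 unfolding E by auto
      ultimately have "lab ls (fst E + j) = lab ls (q + (j - ?b))" using start by simp
      then show ?thesis using F(4)[of "j - ?b"] \<open>j - ?b < ?f\<close> 3 by simp
    qed
  qed
  show "is_arc ls E"
    unfolding is_arc_def
  proof (simp add: split_beta, intro conjI allI impI)
    show "fst E < ?n" "2 \<le> snd E" unfolding E using n F(1) B(1) by auto
    fix j assume "0 < j \<and> j < snd E - Suc 0"
    then show "lab ls (fst E) < lab ls (fst E + j)" "lab ls (fst E + snd E - Suc 0) < lab ls (fst E + j)"
      using internal[of j] first last B(3) F(3) by auto
  qed
  show "\<not> trivial_arc E" unfolding trivial_arc_def E using F(1) B(1) by simp
  show "arc_level ls E < i" unfolding arc_level_def using first last B(3) F(3)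
    by (simp add: split_beta)
qed

lemma enclosing_arc_internal_corner_label_ge:
  assumes "mobile_labels ls" "lab ls q = i" "2 \<le> i" "y \<in> internal_corners ls (enclosing_arc ls i q)"
  shows "i \<le> ls ! y"
  using assms(4) enclosing_arc_spec(5)[OF assms(1-3)]
  unfolding internal_corners_def by (auto split: prod.splits simp: nth_mod_length_eq_lab)

lemma internal_corner_enclosing_arc:
  assumes m: "mobile_labels ls" and l: "lab ls q = i" and i: "2 \<le> i"
  shows "q mod length ls \<in> internal_corners ls (enclosing_arc ls i q)"
proof -
  let ?n = "length ls" let ?b = "prev_below ls i q"
  have l1: "lab ls q \<noteq> 1" using l i by auto
  note F = next_below_spec[OF m l1 i] and B = prev_below_spec[OF m l1 i]
  have "((q + ?n - ?b) mod ?n + ?b) mod ?n = (q + ?n - ?b + ?b) mod ?n" by (rule mod_add_left_eq)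
  also have "q + ?n - ?b + ?b = q + ?n" using B(2) by auto
  finally show ?thesis unfolding internal_corners_def enclosing_arc_def using B(1) F(1)
    by (auto intro!: exI[of _ ?b])
qed

lemma enclosing_arc_mod:
  assumes m: "mobile_labels ls" and l: "lab ls q \<noteq> 1" and i: "2 \<le> i"
  shows "enclosing_arc ls i (q mod length ls) = enclosing_arc ls i q"
proof -
  let ?n = "length ls"
  have next_mod: "next_below ls i (q mod ?n) = next_below ls i q"
    unfolding next_below_def using lab_mod_add by metis
  have "lab ls (q mod ?n + ?n - j) = lab ls (q + ?n - j)" if "j \<le> ?n" for j
  proof -
    have "lab ls (q mod ?n + ?n - j) = lab ls (q mod ?n + (?n - j))" using that by (rule lab_sub_eq_lab_add)
    also have "\<dots> = lab ls (q + (?n - j))" by (rule lab_mod_add)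
    finally show ?thesis using lab_sub_eq_lab_add[OF that, of q] by simp
  qed
  then have "(\<lambda>j. 0 < j \<and> j \<le> ?n \<and> lab ls (q mod ?n + ?n - j) < i) =
             (\<lambda>j. 0 < j \<and> j \<le> ?n \<and> lab ls (q + ?n - j) < i)" by (intro ext) auto
  then have prev_mod: "prev_below ls i (q mod ?n) = prev_below ls i q"
    unfolding prev_below_def by simp
  have "prev_below ls i q \<le> ?n" using prev_below_spec(2)[OF m l i] by simp
  then have "q mod ?n + ?n - prev_below ls i q = q mod ?n + (?n - prev_below ls i q)"
    "q + ?n - prev_below ls i q = q + (?n - prev_below ls i q)" by auto
  then have "(q mod ?n + ?n - prev_below ls i q) mod ?n = (q + ?n - prev_below ls i q) mod ?n"
    by (simp add: mod_add_left_eq)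
  then show ?thesis unfolding enclosing_arc_def next_mod prev_mod by simp
qed

lemma arc_eq_enclosing_arc_at:
  assumes A: "is_arc ls (s, m')" and t: "0 < t" "t < m' - 1"
    and l: "lab ls (s + t) = i" and lev: "arc_level ls (s, m') = i - 1" and i: "2 \<le> i"
  shows "(s, m') = enclosing_arc ls i (s + t)"
proof -
  let ?n = "length ls"
  have sn: "s < ?n" using A unfolding is_arc_def by auto
  have ends: "lab ls s < i" "lab ls (s + m' - 1) < i" using lev i unfolding arc_level_def by auto
  have internal: "i \<le> lab ls (s + j)" if "0 < j" "j < m' - 1" for j
    using arc_internal_label_gt(3)[OF A that] lev by simp
  have tn: "t < ?n"
  proof (rule ccontr)
    assume "\<not> t < ?n"
    then have "i \<le> lab ls (s + ?n)" using internal[of ?n] sn t by fastforce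
    then show False using ends by simp
  qed
  have "next_below ls i (s + t) = m' - 1 - t"
  proof (rule next_below_eqI)
    have "s + t + (m' - 1 - t) = s + m' - 1" using t by auto
    then show "lab ls (s + t + (m' - 1 - t)) < i" using ends by simp
    fix k assume "0 < k" "k < m' - 1 - t"
    then show "i \<le> lab ls (s + t + k)" using internal[of "t + k"] t by (simp add: add.assoc)
  qed (use t in auto)
  moreover have "prev_below ls i (s + t) = t"
  proof (rule prev_below_eqI)
    have "s + t + ?n - t = s + ?n" by auto
    then show "lab ls (s + t + ?n - t) < i" using ends by simp
    fix k assume k: "0 < k" "k < t"
    then have "s + t + ?n - k = s + (t - k) + ?n" by auto
    then have "lab ls (s + t + ?n - k) = lab ls (s + (t - k))" by (simp only: lab_add_length)
    then show "i \<le> lab ls (s + t + ?n - k)" using internal[of "t - k"] k t by simp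
  qed (use t tn in auto)
  moreover have "(s + t + ?n - t) mod ?n = s" using sn by simp
  ultimately show ?thesis unfolding enclosing_arc_def using t by auto
qed

lemma arc_eq_enclosing_arc:
  assumes m: "mobile_labels ls" and i: "2 \<le> i" and B: "is_arc ls B" and lev: "arc_level ls B = i - 1"
    and c: "c \<in> arc_corners ls B" "ls ! c = i"
  shows "B = enclosing_arc ls i c"
proof -
  obtain s m' where sm: "B = (s, m')" by fastforce
  obtain t where t: "t < m'" "c = (s + t) mod length ls" using c(1) unfolding sm arc_corners_def by auto
  have l: "lab ls (s + t) = i" using t(2) c(2) by (simp add: nth_mod_length_eq_lab)
  have "2 \<le> m'" using B sm unfolding is_arc_def by auto
  have ends: "lab ls s < i" "lab ls (s + m' - 1) < i" using lev i sm unfolding arc_level_def by auto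
  have "0 < t" using ends l by (cases "t = 0") auto
  moreover have "t < m' - 1"
  proof (rule ccontr)
    assume "\<not> t < m' - 1"
    then have "s + t = s + m' - 1" using t \<open>2 \<le> m'\<close> by auto
    then show False using ends l by auto
  qed
  ultimately have "B = enclosing_arc ls i (s + t)"
    using arc_eq_enclosing_arc_at[OF _ _ _ l _ i] B lev sm by simp
  also have "\<dots> = enclosing_arc ls i c"
    using enclosing_arc_mod[OF m _ i, of "s + t"] l i t(2) by simp
  finally show ?thesis .
qed

lemma enclosing_arc_level_eq_iff:
  assumes m: "mobile_labels ls" and l: "lab ls q = i" and i: "2 \<le> i"
  shows "arc_level ls (enclosing_arc ls i q) = i - 1 \<longleftrightarrow>
    (\<exists>j. 0 < j \<and> j < length ls \<and> lab ls (q + j) = i - 1 \<and>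
          (\<forall>k. 0 < k \<and> k < j \<longrightarrow> i \<le> lab ls (q + k)))
    \<or> (\<exists>j. 0 < j \<and> j < length ls \<and> lab ls (q + length ls - j) = i - 1 \<and>
          (\<forall>k. 0 < k \<and> k < j \<longrightarrow> i \<le> lab ls (q + length ls - k)))"
    (is "_ \<longleftrightarrow> ?ahead \<or> ?behind")
proof -
  let ?n = "length ls" let ?f = "next_below ls i q" let ?b = "prev_below ls i q"
  have l1: "lab ls q \<noteq> 1" using l i by auto
  note F = next_below_spec[OF m l1 i] and B = prev_below_spec[OF m l1 i] and E = enclosing_arc_spec[OF m l i]
  have level: "arc_level ls (enclosing_arc ls i q) = max (lab ls (q + ?n - ?b)) (lab ls (q + ?f))"
    unfolding arc_level_def using E(3,4) by (simp add: split_beta)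
  show ?thesis
  proof
    assume "arc_level ls (enclosing_arc ls i q) = i - 1"
    then have "lab ls (q + ?f) = i - 1 \<or> lab ls (q + ?n - ?b) = i - 1"
      unfolding level by (auto simp: max_def split: if_splits)
    then show "?ahead \<or> ?behind"
    proof
      assume "lab ls (q + ?f) = i - 1"
      then have ?ahead using F by (intro exI[of _ ?f]) auto
      then show ?thesis ..
    next
      assume "lab ls (q + ?n - ?b) = i - 1"
      then have ?behind using B by (intro exI[of _ ?b]) auto
      then show ?thesis ..
    qed
  next
    assume "?ahead \<or> ?behind"
    then have "lab ls (q + ?f) = i - 1 \<or> lab ls (q + ?n - ?b) = i - 1"
    proof
      assume ?ahead
      then obtain j where "0 < j" "lab ls (q + j) = i - 1" "\<forall>k. 0 < k \<and> k < j \<longrightarrow> i \<le> lab ls (q + k)"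
        by blast
      then show ?thesis using next_below_eqI[of j ls q i] i by auto
    next
      assume ?behind
      then obtain j where "0 < j" "j < ?n" "lab ls (q + ?n - j) = i - 1"
        "\<forall>k. 0 < k \<and> k < j \<longrightarrow> i \<le> lab ls (q + ?n - k)"
        by blast
      then show ?thesis using prev_below_eqI[of j ls q i] i by auto
    qed
    then show "arc_level ls (enclosing_arc ls i q) = i - 1" unfolding level using F(3) B(3) by auto
  qed
qed

lemma prop_c_iff_enclosing_arc_level:
  assumes "mobile_labels ls"
  shows "prop_c ls \<longleftrightarrow>
    (\<forall>c<length ls. 2 \<le> ls ! c \<longrightarrow> arc_level ls (enclosing_arc ls (ls ! c) c) = ls ! c - 1)"
proof
  assume c: "prop_c ls"
  show "\<forall>c<length ls. 2 \<le> ls ! c \<longrightarrow> arc_level ls (enclosing_arc ls (ls ! c) c) = ls ! c - 1"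
  proof (intro allI impI)
    fix c assume "c < length ls" "2 \<le> ls ! c"
    then show "arc_level ls (enclosing_arc ls (ls ! c) c) = ls ! c - 1"
      using c[unfolded prop_c_def, rule_format, OF \<open>2 \<le> ls ! c\<close> \<open>c < length ls\<close> refl]
      by (rule enclosing_arc_level_eq_iff[OF assms lab_eq_nth, THEN iffD2])
  qed
next
  assume level: "\<forall>c<length ls. 2 \<le> ls ! c \<longrightarrow> arc_level ls (enclosing_arc ls (ls ! c) c) = ls ! c - 1"
  show "prop_c ls"
    unfolding prop_c_def
  proof (intro allI impI)
    fix i c assume "2 \<le> i" "c < length ls" "ls ! c = i"
    then show "(\<exists>j. 0 < j \<and> j < length ls \<and> lab ls (c + j) = i - 1 \<and>
          (\<forall>k. 0 < k \<and> k < j \<longrightarrow> i \<le> lab ls (c + k)))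
      \<or> (\<exists>j. 0 < j \<and> j < length ls \<and> lab ls (c + length ls - j) = i - 1 \<and>
          (\<forall>k. 0 < k \<and> k < j \<longrightarrow> i \<le> lab ls (c + length ls - k)))"
      using level lab_eq_nth[of c ls]
      by (intro enclosing_arc_level_eq_iff[OF assms _ \<open>2 \<le> i\<close>, THEN iffD1]) auto
  qed
qed

section \<open>The equivalent properties\<close>

lemma arc_level_ge_1: "mobile_labels ls \<Longrightarrow> 1 \<le> arc_level ls A"
  using mobile_labels_lab_ge_1[of ls "fst A"]
  unfolding arc_level_def by (auto split: prod.splits simp: le_max_iff_disj)

lemma arc_corner_lt_length: "mobile_labels ls \<Longrightarrow> x \<in> arc_corners ls A \<Longrightarrow> x < length ls"
  using mobile_labels_length_pos[of ls] unfolding arc_corners_def by (auto split: prod.splits)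

lemma nontrivial_arc_internal_corner:
  assumes "is_arc ls A" "\<not> trivial_arc A"
  shows "(fst A + 1) mod length ls \<in> internal_corners ls A"
proof -
  have "1 < snd A - 1" using assms unfolding is_arc_def trivial_arc_def by (auto split: prod.splits)
  then show ?thesis unfolding internal_corners_def by (auto split: prod.splits intro!: exI[of _ "1::nat"])
qed

lemma prop_a_imp_prop_c:
  assumes m: "mobile_labels ls" and a: "prop_a ls"
  shows "prop_c ls"
  unfolding prop_c_iff_enclosing_arc_level[OF m]
proof (intro allI impI)
  fix c assume c: "c < length ls" "2 \<le> ls ! c"
  let ?i = "ls ! c"
  let ?E = "enclosing_arc ls ?i c"
  have l: "lab ls c = ?i" using c by (simp add: lab_eq_nth)
  note E = enclosing_arc_spec[OF m l c(2)]
  obtain y where y: "y \<in> arc_corners ls ?E" "ls ! y = arc_level ls ?E + 1"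
    using a[unfolded prop_a_def, rule_format, OF arc_level_ge_1[OF m]] E(1,2) by blast
  have "?i \<le> arc_level ls ?E + 1"
    using arc_corner_internal_or_label_le[OF E(1) y(1)] y(2)
      enclosing_arc_internal_corner_label_ge[OF m l c(2)] by fastforce
  then show "arc_level ls ?E = ?i - 1" using E(6) by simp
qed

text \<open>Under (c), the enclosing arc of an internal corner x is either the arc itself or nested
  inside it, by the nesting property; either way its extremity of label ls ! x - 1 lies in the arc.\<close>

lemma prop_c_imp_pred_label_in_arc:
  assumes m: "mobile_labels ls" and c: "prop_c ls"
    and A: "is_arc ls A" and x: "x \<in> internal_corners ls A"
  shows "\<exists>y\<in>arc_corners ls A. ls ! y = ls ! x - 1"
proof -
  let ?v = "ls ! x"
  let ?E = "enclosing_arc ls ?v x"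
  have xA: "x \<in> arc_corners ls A" using x internal_corners_subset by blast
  have xn: "x < length ls" using arc_corner_lt_length[OF m xA] .
  have v: "arc_level ls A < ?v" using arc_internal_corner_label_gt[OF A x] .
  then have v2: "2 \<le> ?v" using arc_level_ge_1[OF m, of A] by simp
  have l: "lab ls x = ?v" using xn by (simp add: lab_eq_nth)
  note E = enclosing_arc_spec[OF m l v2]
  have levE: "arc_level ls ?E = ?v - 1"
    using c[unfolded prop_c_iff_enclosing_arc_level[OF m]] xn v2 by blast
  have xE: "x \<in> internal_corners ls ?E" using internal_corner_enclosing_arc[OF m l v2] xn by simp
  obtain y where y: "y \<in> arc_corners ls ?E" "ls ! y = ?v - 1"
    using arc_level_attained[OF E(1)] levE by auto
  show ?thesis
  proof (cases "A = ?E")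
    case True
    then show ?thesis using y by auto
  next
    case False
    have "arc_corners ls A \<inter> arc_corners ls ?E \<inter> (internal_corners ls A \<union> internal_corners ls ?E) \<noteq> {}"
      using xA xE x internal_corners_subset by blast
    then have "arc_sub ls ?E A"
      using arcs_nested_if_share_internal_corner[OF A E(1) False] levE v by auto
    then show ?thesis using y arc_sub_corners_subset by blast
  qed
qed

lemma nat_set_eq_atLeastAtMost_Max_if_pred_closed:
  fixes S :: "nat set"
  assumes fin: "finite S" and ne: "S \<noteq> {}" and gt: "\<And>v. v \<in> S \<Longrightarrow> k < v"
    and pred: "\<And>v. v \<in> S \<Longrightarrow> Suc k < v \<Longrightarrow> v - 1 \<in> S"
  shows "S = {Suc k..Max S}"
proof
  show "S \<subseteq> {Suc k..Max S}" using fin gt by (auto simp: Suc_le_eq)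
  have below_Max: "Max S - d \<in> S" if "d \<le> Max S - Suc k" for d
    using that
  proof (induction d)
    case 0
    then show ?case using Max_in[OF fin ne] by simp
  next
    case (Suc d)
    then have "Max S - d \<in> S" "Suc k < Max S - d" by auto
    then have "Max S - d - 1 \<in> S" by (rule pred)
    then show ?case by simp
  qed
  show "{Suc k..Max S} \<subseteq> S"
  proof
    fix w assume "w \<in> {Suc k..Max S}"
    then have "w = Max S - (Max S - w)" "Max S - w \<le> Max S - Suc k" by auto
    then show "w \<in> S" using below_Max by metis
  qed
qed

lemma prop_c_imp_prop_b:
  assumes m: "mobile_labels ls" and c: "prop_c ls"
  shows "prop_b ls"
  unfolding prop_b_def
proof (intro allI impI)
  fix i A assume "1 \<le> i" and "is_arc ls A \<and> \<not> trivial_arc A \<and> arc_level ls A = i"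
  then have A: "is_arc ls A" "\<not> trivial_arc A" "arc_level ls A = i" by auto
  let ?S = "(\<lambda>c. ls ! c) ` internal_corners ls A"
  have "internal_corners ls A \<subseteq> {..<length ls}"
    using arc_corner_lt_length[OF m] internal_corners_subset by blast
  then have "finite ?S" by (meson finite_imageI finite_lessThan finite_subset)
  moreover have "?S \<noteq> {}" using nontrivial_arc_internal_corner[OF A(1,2)] by blast
  moreover have "i < v" if "v \<in> ?S" for v
    using that arc_internal_corner_label_gt[OF A(1)] A(3) by blast
  moreover have "v - 1 \<in> ?S" if "v \<in> ?S" "Suc i < v" for v
  proof -
    obtain x where x: "x \<in> internal_corners ls A" "v = ls ! x" using \<open>v \<in> ?S\<close> by blast
    obtain y where y: "y \<in> arc_corners ls A" "ls ! y = v - 1"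
      using prop_c_imp_pred_label_in_arc[OF m c A(1) x(1)] x(2) by blast
    have "\<not> ls ! y \<le> arc_level ls A" using y(2) A(3) \<open>Suc i < v\<close> by simp
    then have "y \<in> internal_corners ls A" using arc_corner_internal_or_label_le[OF A(1) y(1)] by blast
    then show ?thesis using y(2) by (metis image_eqI)
  qed
  ultimately have "?S = {Suc i..Max ?S}" by (rule nat_set_eq_atLeastAtMost_Max_if_pred_closed)
  then show "\<exists>M. ?S = {i + 1..M}" by (intro exI[of _ "Max ?S"]) simp
qed

lemma prop_b_imp_prop_a:
  assumes b: "prop_b ls"
  shows "prop_a ls"
  unfolding prop_a_def
proof (intro allI impI)
  fix i A assume i: "1 \<le> i" and A: "is_arc ls A \<and> \<not> trivial_arc A \<and> arc_level ls A = i"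
  obtain M where M: "(\<lambda>c. ls ! c) ` internal_corners ls A = {i + 1..M}"
    using b[unfolded prop_b_def, rule_format, OF i A] by blast
  have "internal_corners ls A \<noteq> {}" using nontrivial_arc_internal_corner[of ls A] A by blast
  then have "i + 1 \<in> (\<lambda>c. ls ! c) ` internal_corners ls A" using M by fastforce
  then show "\<exists>c\<in>arc_corners ls A. ls ! c = i + 1" using internal_corners_subset by fastforce
qed

section \<open>Arcs one level below\<close>

lemma unique_enclosing_arc_of_corner:
  assumes m: "mobile_labels ls" and c: "prop_c ls" and i: "2 \<le> i"
    and x: "x < length ls" "ls ! x = i"
  shows "\<exists>B. is_arc ls B \<and> arc_level ls B = i - 1 \<and> x \<in> arc_corners ls B \<and> \<not> trivial_arc B \<and>
           (\<forall>B'. is_arc ls B' \<and> arc_level ls B' = i - 1 \<and> x \<in> arc_corners ls B' \<longrightarrow> B' = B)"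
proof -
  have l: "lab ls x = i" using x by (simp add: lab_eq_nth)
  note E = enclosing_arc_spec[OF m l i]
  have "arc_level ls (enclosing_arc ls i x) = i - 1"
    using c[unfolded prop_c_iff_enclosing_arc_level[OF m]] x i by blast
  moreover have "x \<in> arc_corners ls (enclosing_arc ls i x)"
    using internal_corner_enclosing_arc[OF m l i] internal_corners_subset x by fastforce
  ultimately show ?thesis
    using E(1,2) arc_eq_enclosing_arc[OF m i] x(2) by blast
qed

lemma unique_enclosing_arc_of_arc:
  assumes m: "mobile_labels ls" and c: "prop_c ls" and i: "2 \<le> i"
    and A: "is_arc ls A" "arc_level ls A = i"
  shows "\<exists>B. is_arc ls B \<and> arc_level ls B = i - 1 \<and> arc_sub ls A B \<and> \<not> trivial_arc B \<and>
           (\<forall>B'. is_arc ls B' \<and> arc_level ls B' = i - 1 \<and> arc_sub ls A B' \<longrightarrow> B' = B)"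
proof -
  obtain x where x: "x \<in> arc_corners ls A" "ls ! x = i" using arc_level_attained[OF A(1)] A(2) by blast
  obtain B where B: "is_arc ls B" "arc_level ls B = i - 1" "x \<in> arc_corners ls B" "\<not> trivial_arc B"
    and unique: "\<And>B'. is_arc ls B' \<Longrightarrow> arc_level ls B' = i - 1 \<Longrightarrow> x \<in> arc_corners ls B' \<Longrightarrow> B' = B"
    using unique_enclosing_arc_of_corner[OF m c i arc_corner_lt_length[OF m x(1)] x(2)] by blast
  have "x \<in> internal_corners ls B" using arc_corner_internal_or_label_le[OF B(1,3)] B(2) x(2) i by auto
  moreover have "A \<noteq> B" using A(2) B(2) i by auto
  moreover have "arc_corners ls A \<inter> arc_corners ls B \<inter> (internal_corners ls A \<union> internal_corners ls B) \<noteq> {}"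
    using calculation(1) x(1) B(3) by blast
  ultimately have "arc_sub ls A B"
    using arcs_nested_if_share_internal_corner[OF A(1) B(1)] A(2) B(2) i by auto
  then show ?thesis using B unique arc_sub_corners_subset x(1) by blast
qed

theorem lemma3:
  fixes ls :: "nat list"
  assumes "mobile_labels ls"
  shows
   "(\<forall>A B. is_arc ls A \<and> is_arc ls B \<and> A \<noteq> B \<and> \<not> trivial_arc A \<and> \<not> trivial_arc B \<and>
        arc_corners ls A \<inter> arc_corners ls B \<inter> (internal_corners ls A \<union> internal_corners ls B) \<noteq> {}
      \<longrightarrow> (arc_sub ls A B \<and> arc_level ls B < arc_level ls A) \<or>
          (arc_sub ls B A \<and> arc_level ls A < arc_level ls B))
  \<and> (prop_a ls = prop_b ls \<and> prop_b ls = prop_c ls)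
  \<and> (prop_a ls \<longrightarrow> (\<forall>i\<ge>2.
        (\<forall>A. is_arc ls A \<and> arc_level ls A = i \<longrightarrow>
           (\<exists>B. is_arc ls B \<and> arc_level ls B = i - 1 \<and> arc_sub ls A B \<and> \<not> trivial_arc B \<and>
                (\<forall>B'. is_arc ls B' \<and> arc_level ls B' = i - 1 \<and> arc_sub ls A B' \<longrightarrow> B' = B)))
      \<and> (\<forall>c<length ls. ls ! c = i \<longrightarrow>
           (\<exists>B. is_arc ls B \<and> arc_level ls B = i - 1 \<and> c \<in> arc_corners ls B \<and> \<not> trivial_arc B \<and>
                (\<forall>B'. is_arc ls B' \<and> arc_level ls B' = i - 1 \<and> c \<in> arc_corners ls B' \<longrightarrow> B' = B)))))"
proof -
  have a_c: "prop_a ls \<longleftrightarrow> prop_c ls"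
    using prop_a_imp_prop_c prop_c_imp_prop_b prop_b_imp_prop_a assms by blast
  have b_c: "prop_b ls \<longleftrightarrow> prop_c ls"
    using prop_a_imp_prop_c prop_c_imp_prop_b prop_b_imp_prop_a assms by blast
  show ?thesis
    using arcs_nested_if_share_internal_corner[of ls]
      unique_enclosing_arc_of_arc[OF assms] unique_enclosing_arc_of_corner[OF assms] a_c b_c
    by simp
qed

end
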